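(* Let $\mathbf{x}\in\mathrm{Mat}_{m\times n}(\mathbb{C}^* )$ and $i\in[m-1]$. Then $s_i(\mathbf{x})=R_i(\mathbf{x})$, where $s_i(\mathbf{x})=e_i^{\varepsilon_i(\mathbf{x})/\varphi_i(\mathbf{x})}(\mathbf{x})=e_i^{\pi_{i+1}/\pi_i}(\mathbf{x})$.
   Context: Rows $\mathbf{x}_i=(x_i^1,\dots,x_i^n)$, $\pi_i=\prod_{j=1}^nx_i^j$. For $u,v\in(\mathbb{C}^* )^n$, $\sigma^j(u,v;c)=\sum_{r=1}^nc^{\mathbb{1}_{r\le j}}v^1\cdots v^{r-1}u^{r+1}\cdots u^n$, $\sigma(u,v)=\sigma^j(u,v;1)$. The basic $\mathrm{GL}_m$-geometric crystal structure on $m\times n$ matrices (the product $(X_m)^n$ over columns) has $\varepsilon_i(\mathbf{x})=\pi_{i+1}/\sigma(\mathbf{x}_i,\mathbf{x}_{i+1})$, $\varphi_i(\mathbf{x})=\pi_i/\sigma(\mathbf{x}_i,\mathbf{x}_{i+1})$, and $e_i^c$ fixes rows other than $i,i+1$ and replaces $x_i^j$ by $x_i^j\sigma^j/\sigma^{j-1}$ and $x_{i+1}^j$ by $x_{i+1}^j\sigma^{j-1}/\sigma^j$ with $\sigma^k=\sigma^k(\mathbf{x}_i,\mathbf{x}_{i+1};c)$. The geometric $R$-matrix is $R((x_1,\dots,x_n),(y_1,\dots,y_n))=((y_1',\dots,y_n'),(x_1',\dots,x_n'))$ with $y'_j=y_j\kappa_{j+1}/\kappa_j$, $x'_j=x_j\kappa_j/\kappa_{j+1}$,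 $\kappa_r=\sum_{k=0}^{n-1}y_r\cdots y_{r+k-1}x_{r+k+1}\cdots x_{r+n-1}$ (subscripts mod $n$); $R_i$ replaces rows $(\mathbf{x}_i,\mathbf{x}_{i+1})$ by $(\mathbf{x}'_{i+1},\mathbf{x}'_i)$, where $(\mathbf{x}'_{i+1},\mathbf{x}'_i)=R(\mathbf{x}_i,\mathbf{x}_{i+1})$. *)

theory Defs
  imports Complex_Main
begin

text \<open>Matrices are functions x :: nat => nat => complex, entry x i j in row i, column j,
  indices 1-based (rows 1..m, columns 1..n). A row is a function nat => complex.\<close>

definition rowprod :: "nat \<Rightarrow> (nat \<Rightarrow> nat \<Rightarrow> complex) \<Rightarrow> nat \<Rightarrow> complex" where
  "rowprod n x i = (\<Prod>j=1..n. x i j)"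

definition sigma_c :: "nat \<Rightarrow> (nat \<Rightarrow> complex) \<Rightarrow> (nat \<Rightarrow> complex) \<Rightarrow> nat \<Rightarrow> complex \<Rightarrow> complex" where
  "sigma_c n u v j c = (\<Sum>r=1..n. (if r \<le> j then c else 1) * (\<Prod>k=1..<r. v k) * (\<Prod>k=r+1..n. u k))"

text \<open>sigma(u,v) = sigma^j(u,v;1) (independent of j)\<close>
definition sigma :: "nat \<Rightarrow> (nat \<Rightarrow> complex) \<Rightarrow> (nat \<Rightarrow> complex) \<Rightarrow> complex" where
  "sigma n u v = sigma_c n u v n 1"

definition eps :: "nat \<Rightarrow> nat \<Rightarrow> (nat \<Rightarrow> nat \<Rightarrow> complex) \<Rightarrow> complex" where
  "eps n i x = rowprod n x (i+1) / sigma n (x i) (x (i+1))"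

definition phi :: "nat \<Rightarrow> nat \<Rightarrow> (nat \<Rightarrow> nat \<Rightarrow> complex) \<Rightarrow> complex" where
  "phi n i x = rowprod n x i / sigma n (x i) (x (i+1))"

definition e_op :: "nat \<Rightarrow> nat \<Rightarrow> complex \<Rightarrow> (nat \<Rightarrow> nat \<Rightarrow> complex) \<Rightarrow> (nat \<Rightarrow> nat \<Rightarrow> complex)" where
  "e_op n i c x = (\<lambda>a b.
     (let s = (\<lambda>k. sigma_c n (x i) (x (i+1)) k c) in
      if 1 \<le> b \<and> b \<le> n then
        (if a = i then x i b * s b / s (b - 1)
         else if a = i + 1 then x (i+1) b * s (b - 1) / s b
         else x a b)
      else x a b))"

definition s_op :: "nat \<Rightarrow> nat \<Rightarrow> (nat \<Rightarrow> nat \<Rightarrow> complex) \<Rightarrow> (nat \<Rightarrow> nat \<Rightarrow> complex)" where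
  "s_op n i x = e_op n i (eps n i x / phi n i x) x"

text \<open>Reduce an index into 1..n modulo n.\<close>
definition idx :: "nat \<Rightarrow> nat \<Rightarrow> nat" where
  "idx n k = (k + n - 1) mod n + 1"

definition kappa :: "nat \<Rightarrow> (nat \<Rightarrow> complex) \<Rightarrow> (nat \<Rightarrow> complex) \<Rightarrow> nat \<Rightarrow> complex" where
  "kappa n x y r = (\<Sum>k=0..<n. (\<Prod>t=0..<k. y (idx n (r + t))) * (\<Prod>t=k+1..<n. x (idx n (r + t))))"

definition geomR :: "nat \<Rightarrow> (nat \<Rightarrow> complex) \<Rightarrow> (nat \<Rightarrow> complex) \<Rightarrow> (nat \<Rightarrow> complex) \<times> (nat \<Rightarrow> complex)" where
  "geomR n x y =
     ((\<lambda>j. y j * kappa n x y (idx n (j+1)) / kappa n x y j),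
      (\<lambda>j. x j * kappa n x y j / kappa n x y (idx n (j+1))))"

text \<open>R_i replaces rows (x_i, x_{i+1}) by (x'_{i+1}, x'_i) where (x'_{i+1}, x'_i) = R(x_i, x_{i+1}).\<close>
definition R_op :: "nat \<Rightarrow> nat \<Rightarrow> (nat \<Rightarrow> nat \<Rightarrow> complex) \<Rightarrow> (nat \<Rightarrow> nat \<Rightarrow> complex)" where
  "R_op n i x = (\<lambda>a b.
     if 1 \<le> b \<and> b \<le> n then
       (if a = i then fst (geomR n (x i) (x (i+1))) b
        else if a = i + 1 then snd (geomR n (x i) (x (i+1))) b
        else x a b)
     else x a b)"

end

(* With c = pi_(i+1) / pi_i, multiplying sigma^j(u,v;c) by u_1...u_j gives kappa_(j+1)(u,v) times
   v_1...v_j, summand by summand: for r > j the r-th summand of sigma^j is already a summand of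
   kappa_(j+1), while for r <= j the factor c = v_1...v_n / u_1...u_n supplies the missing v's and
   cancels u's, so that the monomial wraps cyclically around the row.  Dividing this identity at j
   by the one at j - 1 turns the ratios sigma^j / sigma^(j-1) in e_i^c into kappa_(j+1) / kappa_j,
   which are the ratios in the geometric R-matrix. *)

theory Submission
  imports Defs
begin

lemma idx_eq_self: "1 \<le> s \<Longrightarrow> s \<le> n \<Longrightarrow> idx n s = s"
  unfolding idx_def by (cases s) auto

lemma idx_eq_minus: "n < s \<Longrightarrow> s \<le> 2 * n \<Longrightarrow> idx n s = s - n"
  unfolding idx_def by (simp add: le_mod_geq)

lemma idx_idx:
  assumes "1 \<le> n"
  shows "idx n (idx n a + t) = idx n (a + t)"
proof -
  have "a + n - 1 + t = a + t + n - 1" using assms by simp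
  then show ?thesis by (simp add: idx_def mod_add_left_eq)
qed

lemma kappa_idx: "1 \<le> n \<Longrightarrow> kappa n x y (idx n r) = kappa n x y r"
  by (simp add: kappa_def idx_idx)

lemma prod_idx_shift:
  "(\<Prod>t=a..<b. f (idx n (c + t))) = (\<Prod>s=c+a..<c+b. f (idx n s))"
  using prod.shift_bounds_nat_ivl[of "\<lambda>s. f (idx n s)" a c b] by (simp add: add.commute)

lemma prod_idx_eq_self:
  "1 \<le> p \<Longrightarrow> q \<le> n + 1 \<Longrightarrow> (\<Prod>s=p..<q. f (idx n s)) = (\<Prod>s=p..<q. f s)"
  by (rule prod.cong) (auto simp: idx_eq_self)

lemma prod_idx_eq_shift_down:
  assumes "n + 1 \<le> p" "p \<le> q" "q \<le> 2 * n + 1"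
  shows "(\<Prod>s=p..<q. f (idx n s)) = (\<Prod>s=p-n..<q-n. f s)"
proof -
  have "(\<Prod>s=p-n..<q-n. f s) = (\<Prod>s=p-n+n..<q-n+n. f (s - n))"
    using prod.shift_bounds_nat_ivl[of "\<lambda>s. f (s - n)" "p - n" n "q - n"] by simp
  also have "\<dots> = (\<Prod>s=p..<q. f (idx n s))"
    using assms by (intro prod.cong) (auto simp: idx_eq_minus)
  finally show ?thesis by simp
qed

lemma prod_atLeastAtMost_split:
  fixes f :: "nat \<Rightarrow> 'a::comm_monoid_mult"
  assumes "m \<le> k + 1" "k \<le> n"
  shows "(\<Prod>s=m..n. f s) = (\<Prod>s=m..k. f s) * (\<Prod>s=k+1..n. f s)"
  using prod.ub_add_nat[of m k f "n - k"] assms by simp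

definition kappa_term :: "nat \<Rightarrow> (nat \<Rightarrow> complex) \<Rightarrow> (nat \<Rightarrow> complex) \<Rightarrow> nat \<Rightarrow> nat \<Rightarrow> complex" where
  "kappa_term n x y r k = (\<Prod>t=0..<k. y (idx n (r + t))) * (\<Prod>t=k+1..<n. x (idx n (r + t)))"

lemma kappa_eq_sum_kappa_term: "kappa n x y r = (\<Sum>k=0..<n. kappa_term n x y r k)"
  by (simp add: kappa_def kappa_term_def)

lemma kappa_term_unwrapped:
  assumes "j < r" "r \<le> n"
  shows "(\<Prod>s=1..<r. v s) * (\<Prod>s=r+1..n. u s) * (\<Prod>s=1..j. u s)
       = kappa_term n u v (j + 1) (r - j - 1) * (\<Prod>s=1..j. v s)"
proof -
  have "kappa_term n u v (j + 1) (r - j - 1)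
      = (\<Prod>s=j+1..<r. v (idx n s)) * (\<Prod>s=r+1..<j+1+n. u (idx n s))"
    unfolding kappa_term_def prod_idx_shift using assms by simp
  also have "(\<Prod>s=r+1..<j+1+n. u (idx n s))
           = (\<Prod>s=r+1..<n+1. u (idx n s)) * (\<Prod>s=n+1..<j+1+n. u (idx n s))"
    using assms by (intro prod.atLeastLessThan_concat[symmetric]) auto
  also have "\<dots> = (\<Prod>s=r+1..n. u s) * (\<Prod>s=1..j. u s)"
    using assms prod_idx_eq_self[of "r+1" "n+1" n u] prod_idx_eq_shift_down[of n "n+1" "j+1+n" u]
    by (simp add: atLeastLessThanSuc_atLeastAtMost)
  also have "(\<Prod>s=j+1..<r. v (idx n s)) = (\<Prod>s=j+1..<r. v s)"
    using assms by (intro prod_idx_eq_self) auto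
  moreover have "(\<Prod>s=1..j. v s) * (\<Prod>s=j+1..<r. v s) = (\<Prod>s=1..<r. v s)"
    using assms prod.atLeastLessThan_concat[of 1 "j+1" r v]
    by (simp add: atLeastLessThanSuc_atLeastAtMost)
  ultimately show ?thesis by (simp add: ac_simps)
qed

lemma kappa_term_wrapped:
  assumes "1 \<le> r" "r \<le> j" "j \<le> n"
  shows "(\<Prod>s=1..n. v s) * (\<Prod>s=1..<r. v s) * (\<Prod>s=r+1..n. u s) * (\<Prod>s=1..j. u s)
       = kappa_term n u v (j + 1) (r + n - j - 1) * (\<Prod>s=1..n. u s) * (\<Prod>s=1..j. v s)"
proof -
  have "kappa_term n u v (j + 1) (r + n - j - 1)
      = (\<Prod>s=j+1..<r+n. v (idx n s)) * (\<Prod>s=r+n+1..<j+1+n. u (idx n s))"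
    unfolding kappa_term_def prod_idx_shift using assms by simp
  also have "(\<Prod>s=j+1..<r+n. v (idx n s))
           = (\<Prod>s=j+1..<n+1. v (idx n s)) * (\<Prod>s=n+1..<r+n. v (idx n s))"
    using assms by (intro prod.atLeastLessThan_concat[symmetric]) auto
  also have "\<dots> = (\<Prod>s=j+1..n. v s) * (\<Prod>s=1..<r. v s)"
    using assms prod_idx_eq_self[of "j+1" "n+1" n v] prod_idx_eq_shift_down[of n "n+1" "r+n" v]
    by (simp add: atLeastLessThanSuc_atLeastAtMost)
  also have "(\<Prod>s=r+n+1..<j+1+n. u (idx n s)) = (\<Prod>s=r+1..j. u s)"
    using assms prod_idx_eq_shift_down[of n "r+n+1" "j+1+n" u]
    by (simp add: atLeastLessThanSuc_atLeastAtMost)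
  moreover have "(\<Prod>s=1..n. v s) = (\<Prod>s=1..j. v s) * (\<Prod>s=j+1..n. v s)"
    using assms by (intro prod_atLeastAtMost_split) auto
  moreover have "(\<Prod>s=1..n. u s) = (\<Prod>s=1..r. u s) * (\<Prod>s=r+1..n. u s)"
    using assms by (intro prod_atLeastAtMost_split) auto
  moreover have "(\<Prod>s=1..j. u s) = (\<Prod>s=1..r. u s) * (\<Prod>s=r+1..j. u s)"
    using assms by (intro prod_atLeastAtMost_split) auto
  ultimately show ?thesis by (simp add: ac_simps)
qed

lemma sigma_c_mult_prod_eq_kappa_mult_prod:
  fixes u v :: "nat \<Rightarrow> complex"
  assumes "j \<le> n" and u: "\<forall>k\<in>{1..n}. u k \<noteq> 0"
  shows "sigma_c n u v j ((\<Prod>k=1..n. v k) / (\<Prod>k=1..n. u k)) * (\<Prod>k=1..j. u k)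
       = kappa n u v (j + 1) * (\<Prod>k=1..j. v k)"
proof -
  define c where "c = (\<Prod>k=1..n. v k) / (\<Prod>k=1..n. u k)"
  define S where "S r = (if r \<le> j then c else 1) * (\<Prod>k=1..<r. v k) * (\<Prod>k=r+1..n. u k)" for r
  define T where "T = kappa_term n u v (j + 1)"
  define U where "U = (\<Prod>k=1..j. u k)"
  define V where "V = (\<Prod>k=1..j. v k)"
  have "(\<Prod>k=1..n. u k) \<noteq> 0" using u by simp
  then have wrapped: "S r * U = T (r + n - j - 1) * V" if "1 \<le> r" "r \<le> j" for r
    using kappa_term_wrapped[OF that \<open>j \<le> n\<close>, of v u] that
    unfolding S_def T_def U_def V_def c_def by (simp add: field_simps)
  have unwrapped: "S r * U = T (r - j - 1) * V" if "j < r" "r \<le> n" for r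
    using kappa_term_unwrapped[OF that, of v u] that
    unfolding S_def T_def U_def V_def by (simp add: ac_simps)
  have "sigma_c n u v j c * U = (\<Sum>r=1..n. S r * U)"
    unfolding sigma_c_def S_def sum_distrib_right ..
  also have "\<dots> = (\<Sum>r=1..j. S r * U) + (\<Sum>r=j+1..n. S r * U)"
    using sum.ub_add_nat[of 1 j "\<lambda>r. S r * U" "n - j"] \<open>j \<le> n\<close> by simp
  also have "(\<Sum>r=1..j. S r * U) = (\<Sum>k=n-j..<n. T k * V)"
    by (rule sum.reindex_bij_witness[of _ "\<lambda>k. k + j + 1 - n" "\<lambda>r. r + n - j - 1"])
       (use \<open>j \<le> n\<close> wrapped in auto)
  also have "(\<Sum>r=j+1..n. S r * U) = (\<Sum>k=0..<n-j. T k * V)"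
    by (rule sum.reindex_bij_witness[of _ "\<lambda>k. k + j + 1" "\<lambda>r. r - j - 1"])
       (use \<open>j \<le> n\<close> unwrapped in auto)
  also have "(\<Sum>k=n-j..<n. T k * V) + (\<Sum>k=0..<n-j. T k * V) = (\<Sum>k=0..<n. T k) * V"
    using sum.atLeastLessThan_concat[of 0 "n - j" n T] \<open>j \<le> n\<close>
    by (simp add: sum_distrib_right[symmetric]) (metis add.commute distrib_right)
  also have "(\<Sum>k=0..<n. T k) = kappa n u v (j + 1)"
    unfolding T_def kappa_eq_sum_kappa_term ..
  finally show ?thesis
    unfolding c_def U_def V_def .
qed

(* No hypothesis on the denominators is needed: s = 0 forces K = 0 (and s' = 0 forces K' = 0),
   and then both quotients are 0 by the convention x / 0 = 0. *)
lemma ratios_eq_of_cross_eqs: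
  fixes s s' K K' U V a b :: "'a::field"
  assumes "s' * (U * a) = K' * (V * b)" "s * U = K * V"
    and "U \<noteq> 0" "V \<noteq> 0" "a \<noteq> 0" "b \<noteq> 0"
  shows "a * s' / s = b * K' / K" "b * s / s' = a * K / K'"
proof -
  have s': "s' = K' * V * b / (U * a)" and s: "s = K * V / U"
    using assms by (simp_all add: field_simps)
  show "a * s' / s = b * K' / K" "b * s / s' = a * K / K'"
    unfolding s' s using assms by (simp_all add: field_simps)
qed

lemma e_op_eq_R_op:
  assumes u: "\<forall>b\<in>{1..n}. x i b \<noteq> 0" and v: "\<forall>b\<in>{1..n}. x (i+1) b \<noteq> 0"
  shows "e_op n i (rowprod n x (i+1) / rowprod n x i) x = R_op n i x"
proof (intro ext)
  fix a b
  define c where "c = rowprod n x (i+1) / rowprod n x i"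
  define sg where "sg j = sigma_c n (x i) (x (i+1)) j c" for j
  define K where "K = kappa n (x i) (x (i+1))"
  define U where "U = (\<Prod>k=1..b-1. x i k)"
  define V where "V = (\<Prod>k=1..b-1. x (i+1) k)"
  show "e_op n i c x a b = R_op n i x a b"
  proof (cases "b \<in> {1..n}")
    case False
    then show ?thesis unfolding e_op_def R_op_def by auto
  next
    case True
    have key: "sg j * (\<Prod>k=1..j. x i k) = K (j + 1) * (\<Prod>k=1..j. x (i+1) k)" if "j \<le> n" for j
      using sigma_c_mult_prod_eq_kappa_mult_prod[OF that u]
      unfolding sg_def K_def c_def rowprod_def .
    have "(\<Prod>k=1..b. f k) = (\<Prod>k=1..b-1. f k) * f b" for f :: "nat \<Rightarrow> complex"
      using True by (cases b) (auto simp: prod.cl_ivl_Suc)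
    then have "sg b * (U * x i b) = K (b + 1) * (V * x (i+1) b)"
      using key[of b] True unfolding U_def V_def by simp
    moreover have "sg (b-1) * U = K b * V"
      using key[of "b-1"] True unfolding U_def V_def by auto
    moreover have "U \<noteq> 0" "V \<noteq> 0" "x i b \<noteq> 0" "x (i+1) b \<noteq> 0"
      using u v True unfolding U_def V_def by auto
    ultimately have "x i b * sg b / sg (b-1) = x (i+1) b * K (b+1) / K b"
      "x (i+1) b * sg (b-1) / sg b = x i b * K b / K (b+1)"
      by (rule ratios_eq_of_cross_eqs)+
    moreover have "K (idx n (b+1)) = K (b+1)"
      using True kappa_idx unfolding K_def by auto
    ultimately show ?thesis
      using True unfolding e_op_def R_op_def geomR_def sg_def K_def by (auto simp: Let_def)
  qed
qed

theorem proposition6p1: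
  fixes m n i :: nat and x :: "nat \<Rightarrow> nat \<Rightarrow> complex"
  assumes nonzero: "\<forall>a\<in>{1..m}. \<forall>b\<in>{1..n}. x a b \<noteq> 0"
    and i_range: "1 \<le> i" "i + 1 \<le> m"
    and defined: "sigma n (x i) (x (i+1)) \<noteq> 0"
  shows "eps n i x / phi n i x = rowprod n x (i+1) / rowprod n x i
         \<and> s_op n i x = R_op n i x"
proof -
  have ratio: "eps n i x / phi n i x = rowprod n x (i+1) / rowprod n x i"
    using defined by (simp add: eps_def phi_def)
  have "\<forall>b\<in>{1..n}. x i b \<noteq> 0" "\<forall>b\<in>{1..n}. x (i+1) b \<noteq> 0"
    using nonzero i_range by auto
  then have "s_op n i x = R_op n i x"
    unfolding s_op_def ratio by (rule e_op_eq_R_op)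
  with ratio show ?thesis by simp
qed

end
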